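(* Let $n\ge2$. Then $$S_{NC}^\delta(n,-n)=\bigcup_{\pi\in NC(n)}\ \bigcup_{V\in\pi} S_{NC}^\delta(n,-n)_{\pi,V},$$ and this union is disjoint.
   Context: $[\pm n]=\{\pm1,\dots,\pm n\}$; permutations of $\{1,\dots,n\}$ are regarded as permutations of $[\pm n]$ fixing $-1,\dots,-n$. $\delta$ is the permutation $\delta(k)=-k$, $\gamma_n=(1,2,\dots,n)$, so $\gamma_n\delta\gamma_n^{-1}\delta=(1,\dots,n)(-n,\dots,-1)$. For a permutation $\sigma$, $\#(\sigma)$ is its number of cycles (including fixed points). $S_{NC}^\delta(n,-n)$ is the set of permutations $\sigma$ of $[\pm n]$ such that: the subgroup generated by $\sigma$ and $\gamma_n\delta\gamma_n^{-1}\delta$ acts transitively on $[\pm n]$; $\#(\sigma)+\#(\sigma^{-1}\gamma_n\delta\gamma_n^{-1}\delta)=2n$; and $\sigma\delta$ is a pairing (an involution without fixed points). A cycle of $\sigma$ is a through cycle if it meets both $\{1,\dots,n\}$ and $\{-1,\dots,-n\}$. $NC(n)$ is the set of non-crossing partitions of $\{1,\dots,n\}$; each $\pi\in NC(n)$ is regarded as the permutation whose cycles are its blocks, each in increasing order. For $\pi\in NC(n)$ and a block $V\in\pi$, $S_{NC}^\delta(n,-n)_{\pi,V}$ is the set of $\sigma\in S_{NC}^\delta(n,-n)$ such that every cycle of $\sigma$ is either a cycle of $\pi\delta\pi^{-1}\delta$ or contained in $V\cup\delta(V)$, and every cycle of $\sigma$ contained in $V\cup\delta(V)$ is a through cycle.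 *)

theory Defs
  imports "HOL-Combinatorics.Permutations"
begin

definition PM :: "nat \<Rightarrow> int set" where
  "PM n = {k. 1 \<le> \<bar>k\<bar> \<and> \<bar>k\<bar> \<le> int n}"

definition delta :: "int \<Rightarrow> int" where
  "delta k = - k"

definition gamma :: "nat \<Rightarrow> int \<Rightarrow> int" where
  "gamma n k = (if 1 \<le> k \<and> k < int n then k + 1 else if k = int n then 1 else k)"

text \<open>Permutations are composed as functions (right to left).\<close>
definition gdg :: "nat \<Rightarrow> int \<Rightarrow> int" where
  "gdg n = gamma n \<circ> delta \<circ> inv (gamma n) \<circ> delta"

definition cyc :: "(int \<Rightarrow> int) \<Rightarrow> int \<Rightarrow> int set" where
  "cyc f x = {(f ^^ k) x | k. True}"

definition ncyc :: "nat \<Rightarrow> (int \<Rightarrow> int) \<Rightarrow> nat" where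
  "ncyc n f = card (cyc f ` PM n)"

text \<open>The group generated by f and g acts transitively on A
  (orbit under words in f, g and their inverses).\<close>
definition transitive_on :: "int set \<Rightarrow> (int \<Rightarrow> int) \<Rightarrow> (int \<Rightarrow> int) \<Rightarrow> bool" where
  "transitive_on A f g \<longleftrightarrow>
     (\<forall>x\<in>A. \<forall>y\<in>A. (x, y) \<in> ({(z, f z) | z. True} \<union> {(z, inv f z) | z. True}
                            \<union> {(z, g z) | z. True} \<union> {(z, inv g z) | z. True})\<^sup>*)"

definition is_pairing :: "int set \<Rightarrow> (int \<Rightarrow> int) \<Rightarrow> bool" where
  "is_pairing A p \<longleftrightarrow> (\<forall>x\<in>A. p (p x) = x \<and> p x \<noteq> x)"

definition SNC :: "nat \<Rightarrow> (int \<Rightarrow> int) set" where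
  "SNC n = {\<sigma>. \<sigma> permutes PM n
              \<and> transitive_on (PM n) \<sigma> (gdg n)
              \<and> ncyc n \<sigma> + ncyc n (inv \<sigma> \<circ> gdg n) = 2 * n
              \<and> is_pairing (PM n) (\<sigma> \<circ> delta)}"

definition through :: "int set \<Rightarrow> bool" where
  "through C \<longleftrightarrow> (\<exists>x\<in>C. x > 0) \<and> (\<exists>x\<in>C. x < 0)"

definition is_partition :: "nat \<Rightarrow> int set set \<Rightarrow> bool" where
  "is_partition n P \<longleftrightarrow> \<Union>P = {1..int n} \<and> {} \<notin> P
     \<and> (\<forall>V\<in>P. \<forall>W\<in>P. V \<noteq> W \<longrightarrow> V \<inter> W = {})"

definition NC :: "nat \<Rightarrow> int set set set" where
  "NC n = {P. is_partition n P \<and>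
     \<not> (\<exists>V\<in>P. \<exists>W\<in>P. V \<noteq> W \<and> (\<exists>a b c d. a < b \<and> b < c \<and> c < d
            \<and> a \<in> V \<and> c \<in> V \<and> b \<in> W \<and> d \<in> W))}"

text \<open>The permutation whose cycles are the blocks of P, each in increasing order
  (all integers outside the union of the blocks are fixed).\<close>
definition perm_of_partition :: "int set set \<Rightarrow> int \<Rightarrow> int" where
  "perm_of_partition P x =
     (if \<exists>V\<in>P. x \<in> V then
        (let V = (THE V. V \<in> P \<and> x \<in> V) in
          if \<exists>y\<in>V. y > x then Min {y\<in>V. y > x} else Min V)
      else x)"

definition SNC_piV :: "nat \<Rightarrow> int set set \<Rightarrow> int set \<Rightarrow> (int \<Rightarrow> int) set" where
  "SNC_piV n P V = {\<sigma>\<in>SNC n.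
     (let \<rho> = perm_of_partition P \<circ> delta \<circ> inv (perm_of_partition P) \<circ> delta;
          U = V \<union> delta ` V in
      \<forall>x\<in>PM n. (cyc \<sigma> x \<in> cyc \<rho> ` PM n \<or> cyc \<sigma> x \<subseteq> U)
               \<and> (cyc \<sigma> x \<subseteq> U \<longrightarrow> through (cyc \<sigma> x)))}"

end

theory Submission
  imports Defs "HOL-Combinatorics.Orbits"
begin

text \<open>
  The proof counts cycles. For a permutation sigma of [+-n] consider the cycle sum
  #(sigma) + #(sigma^-1 gamma delta gamma^-1 delta). Multiplying sigma on the right by a
  transposition changes each of the two counts by one, so joining two cycles of sigma never
  raises the cycle sum, and lowers it by two when the joined points lie in different cycles of
  sigma^-1 gamma delta gamma^-1 delta. The identity has cycle sum 2n + 2, the elements of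
  S_NC(n,-n) have cycle sum 2n.

  Cutting a point out of its cycle undoes a join, so it does not lower the cycle sum. Cutting
  away all but a few points of an element of S_NC(n,-n) in which two non-through cycles cross, or
  a non-through cycle crosses through cycles, leaves a product of three transpositions of cycle
  sum at least 2n; building that product up from the identity shows that its cycle sum is at
  most 2n - 2. Hence the non-through cycles on the positive side, together with the block V of
  positive points on through cycles, form a non-crossing partition pi, and sigma lies in
  S_NC(n,-n)_{pi,V}. Conversely, the condition defining S_NC(n,-n)_{pi,V} forces V to be the set
  of positive points on through cycles and the other blocks of pi to be the non-through cycles,
  which gives disjointness.
\<close>

section \<open>Cycles of permutations\<close>

lemma cyc_eq_orbit: "permutation f \<Longrightarrow> cyc f x = orbit f x"
  unfolding cyc_def by (simp add: orbit_altdef_permutation)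

lemma funpow_in_cyc: "(f ^^ k) x \<in> cyc f x"
  unfolding cyc_def by auto

lemma self_in_cyc [simp]: "x \<in> cyc f x"
  using funpow_in_cyc[where k=0] by simp

lemma apply_in_cyc [simp]: "f x \<in> cyc f x"
  using funpow_in_cyc[where k=1] by simp

lemma cyc_closed:
  assumes "y \<in> cyc f x"
  shows "f y \<in> cyc f x"
proof -
  obtain k where "y = (f ^^ k) x" using assms unfolding cyc_def by auto
  then show ?thesis using funpow_in_cyc[where k="Suc k"] by simp
qed

lemma cyc_subsetI:
  assumes "x \<in> A" "\<And>w. w \<in> A \<Longrightarrow> f w \<in> A"
  shows "cyc f x \<subseteq> A"
proof
  fix y assume "y \<in> cyc f x"
  then obtain k where "y = (f ^^ k) x" unfolding cyc_def by auto
  moreover have "(f ^^ k) x \<in> A" for k by (induction k) (auto intro: assms)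
  ultimately show "y \<in> A" by simp
qed

lemma cyc_subsetI_inside:
  assumes "x \<in> A" "\<And>w. w \<in> cyc f x \<Longrightarrow> w \<in> A \<Longrightarrow> f w \<in> A"
  shows "cyc f x \<subseteq> A"
proof -
  have "cyc f x \<subseteq> cyc f x \<inter> A"
    by (rule cyc_subsetI) (use assms cyc_closed in auto)
  then show ?thesis by blast
qed

lemma cyc_fixpoint: "f x = x \<Longrightarrow> cyc f x = {x}"
  using cyc_subsetI[of x "{x}" f] self_in_cyc[of x f] by blast

lemma cyc_cong:
  assumes "\<And>w. w \<in> cyc f x \<Longrightarrow> g w = f w"
  shows "cyc g x = cyc f x"
proof -
  have "(g ^^ k) x = (f ^^ k) x" for k
    by (induction k) (use assms funpow_in_cyc in auto)
  then show ?thesis unfolding cyc_def by simp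
qed

lemma cyc_subset_permutes: "f permutes X \<Longrightarrow> x \<in> X \<Longrightarrow> cyc f x \<subseteq> X"
  by (rule cyc_subsetI) (auto simp: permutes_in_image)

context
  fixes f :: "int \<Rightarrow> int"
  assumes f: "permutation f"
begin

lemma cyc_eq: "y \<in> cyc f x \<Longrightarrow> cyc f y = cyc f x"
  using f by (simp add: cyc_eq_orbit orbit_cyclic_eq3 cyclic_on_orbit')

lemma cyc_eq_iff: "cyc f y = cyc f x \<longleftrightarrow> y \<in> cyc f x"
  using cyc_eq self_in_cyc by metis

lemma cyc_sym: "y \<in> cyc f x \<Longrightarrow> x \<in> cyc f y"
  using cyc_eq by fastforce

lemma cyc_disjoint:
  assumes "b \<notin> cyc f a"
  shows "cyc f a \<inter> cyc f b = {}"
proof (rule ccontr)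
  assume "cyc f a \<inter> cyc f b \<noteq> {}"
  then obtain w where "w \<in> cyc f a" "w \<in> cyc f b" by blast
  then have "cyc f a = cyc f b" using cyc_eq by metis
  then show False using assms self_in_cyc[of b f] by simp
qed

lemma cyc_inv: "cyc (inv f) = cyc f"
  using f by (simp add: fun_eq_iff cyc_eq_orbit permutation_inverse orbit_inv_eq)

end


lemma fun_eq_on_support:
  assumes "{w. g w \<noteq> w} \<subseteq> S" "{w. h w \<noteq> w} \<subseteq> S" "\<And>w. w \<in> S \<Longrightarrow> g w = h w"
  shows "g = h"
proof
  fix w
  have "g w = w" "h w = w" if "w \<notin> S" using assms(1,2) that by auto
  then show "g w = h w" using assms(3) by (cases "w \<in> S") auto
qed

lemma support_comp: "{w. (f \<circ> g) w \<noteq> w} \<subseteq> {w. f w \<noteq> w} \<union> {w. g w \<noteq> w}"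
  by auto

lemma support_transpose: "{w. transpose x y w \<noteq> w} \<subseteq> {x, y}"
  by (auto simp: transpose_def)

lemma support_transpose3:
  "{w. (transpose a b \<circ> transpose c d \<circ> transpose e f) w \<noteq> w} \<subseteq> {a, b, c, d, e, f}"
  using support_comp[of "transpose a b \<circ> transpose c d" "transpose e f"]
    support_comp[of "transpose a b" "transpose c d"] support_transpose[of a b]
    support_transpose[of c d] support_transpose[of e f] by blast

lemma support_perm_next:
  assumes g: "permutation g" "{w. g w \<noteq> w} \<subseteq> S"
    and C: "cyc g s \<inter> S = C" "s \<in> C" "t \<in> C" "t \<noteq> s"
  shows "g s \<in> C - {s}"
proof -
  have "g s \<noteq> s" using C cyc_fixpoint[of g s] by auto
  moreover from this have "g (g s) \<noteq> g s"
    using g(1) by (metis permutation_bijective bij_pointE)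
  ultimately show ?thesis using C g(2) by auto
qed

corollary support_perm_swap:
  assumes "permutation g" "{w. g w \<noteq> w} \<subseteq> S" "cyc g s \<inter> S = {s, t}" "s \<noteq> t"
  shows "g s = t"
  using support_perm_next[OF assms(1-3)] assms(4) by auto

lemma support_perm_3cycle:
  assumes g: "permutation g" "{w. g w \<noteq> w} \<subseteq> S"
    and C: "cyc g x \<inter> S = {x, y, z}" "distinct [x, y, z]"
  shows "(g x = y \<and> g y = z \<and> g z = x) \<or> (g x = z \<and> g z = y \<and> g y = x)"
proof -
  have "cyc g y = cyc g x" "cyc g z = cyc g x" using C(1) cyc_eq[OF g(1)] by auto
  then have Cyz: "cyc g y \<inter> S = {x, y, z}" "cyc g z \<inter> S = {x, y, z}" using C(1) by simp_all
  have "g x \<in> {x, y, z} - {x}" using support_perm_next[OF g C(1), of y] C(2) by auto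
  moreover have "g y \<in> {x, y, z} - {y}" using support_perm_next[OF g Cyz(1), of x] C(2) by auto
  moreover have "g z \<in> {x, y, z} - {z}" using support_perm_next[OF g Cyz(2), of x] C(2) by auto
  moreover have "cyc g x \<subseteq> {x, u}" if "g x = u" "g u = x" for u
    by (rule cyc_subsetI) (use that in auto)
  moreover have "inj g" using g(1) by (simp add: permutation_bijective bij_is_inj)
  ultimately show ?thesis using C by (auto dest: injD)
qed

section \<open>Multiplying a permutation by a transposition\<close>

context
  fixes f :: "int \<Rightarrow> int" and x y :: int
  assumes f: "permutation f"
begin

lemma cyc_comp_transpose_merge:
  assumes y: "y \<notin> cyc f x"
  shows "cyc (f \<circ> transpose x y) x = cyc f x \<union> cyc f y"
proof -
  define g where "g = f \<circ> transpose x y"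
  have x: "x \<notin> cyc f y" using y cyc_sym[OF f] by blast
  have gx: "g x = f y" and gy: "g y = f x" and g: "\<And>w. w \<noteq> x \<Longrightarrow> w \<noteq> y \<Longrightarrow> g w = f w"
    by (auto simp: g_def)
  have "cyc g x \<subseteq> cyc f x \<union> cyc f y"
  proof (rule cyc_subsetI)
    fix w assume "w \<in> cyc f x \<union> cyc f y"
    then show "g w \<in> cyc f x \<union> cyc f y"
      using gx gy g[of w] cyc_closed by (cases "w = x \<or> w = y") auto
  qed simp
  moreover have y_part: "cyc f y \<subseteq> cyc g x"
  proof -
    have "cyc f (f y) \<subseteq> cyc g x"
    proof (rule cyc_subsetI_inside)
      fix w assume "w \<in> cyc f (f y)" "w \<in> cyc g x"
      moreover have "w \<noteq> x" if "w \<noteq> y"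
        using \<open>w \<in> cyc f (f y)\<close> cyc_eq[OF f, of "f y" y] x by auto
      ultimately show "f w \<in> cyc g x"
        using gx g[of w] cyc_closed[of w g x] apply_in_cyc[of g x] by (cases "w = y") auto
    qed (simp flip: gx)
    then show ?thesis using cyc_eq[OF f, of "f y" y] by simp
  qed
  moreover have "cyc f x \<subseteq> cyc g x"
  proof (rule cyc_subsetI_inside)
    fix w assume w: "w \<in> cyc f x" "w \<in> cyc g x"
    have "w \<noteq> y" using w(1) y by blast
    moreover have "g y \<in> cyc g x" using y_part self_in_cyc[of y f] cyc_closed[of y g x] by blast
    ultimately show "f w \<in> cyc g x"
      using w(2) gy g[of w] cyc_closed[of w g x] by (cases "w = x") auto
  qed simp
  ultimately show ?thesis unfolding g_def by blast
qed

lemma cyc_comp_transpose_other: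
  assumes "w \<notin> cyc f x \<union> cyc f y"
  shows "cyc (f \<circ> transpose x y) w = cyc f w"
proof (rule cyc_cong)
  fix v assume "v \<in> cyc f w"
  then have "v \<noteq> x" "v \<noteq> y" using assms cyc_sym[OF f] by blast+
  then show "(f \<circ> transpose x y) v = f v" by simp
qed

text \<open>The transposition cuts the cycle of x just before y: the new cycle of x is the f-path
  from f y to x.\<close>
lemma cyc_comp_transpose_split:
  assumes "x \<noteq> y" "y \<in> cyc f x"
  shows "y \<notin> cyc (f \<circ> transpose x y) x"
proof -
  define g where "g = f \<circ> transpose x y"
  have "\<exists>t. (f ^^ t) y = x" using cyc_sym[OF f assms(2)] unfolding cyc_def by auto
  then obtain t where t: "(f ^^ t) y = x" and t_least: "\<And>s. s < t \<Longrightarrow> (f ^^ s) y \<noteq> x"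
    by (auto simp: exists_least_iff[of "\<lambda>t. (f ^^ t) y = x"])
  have "t > 0" using t assms(1) by (cases t) auto
  define A where "A = {(f ^^ j) y | j. 1 \<le> j \<and> j \<le> t}"
  have path_avoids_y: "(f ^^ j) y \<noteq> y" if "1 \<le> j" "j \<le> t" for j
  proof
    assume j: "(f ^^ j) y = y"
    then have "j \<noteq> t" using t assms(1) by auto
    have "(f ^^ (t - j)) ((f ^^ j) y) = x"
      using t that by (simp flip: funpow_add[unfolded o_def, THEN fun_cong])
    then show False using j t_least[of "t - j"] that by simp
  qed
  have "cyc g x \<subseteq> A"
  proof (rule cyc_subsetI)
    show "x \<in> A" unfolding A_def using t \<open>t > 0\<close> by force
  next
    fix w assume "w \<in> A"
    then obtain j where j: "w = (f ^^ j) y" "1 \<le> j" "j \<le> t" unfolding A_def by auto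
    show "g w \<in> A"
    proof (cases "j = t")
      case True
      then have "g w = (f ^^ 1) y" using j t by (simp add: g_def)
      then show ?thesis unfolding A_def using \<open>t > 0\<close> by force
    next
      case False
      then have "w \<noteq> x" "w \<noteq> y" using j t_least path_avoids_y by auto
      then have "g w = (f ^^ Suc j) y" using j by (simp add: g_def)
      then show ?thesis unfolding A_def using j False by force
    qed
  qed
  moreover have "y \<notin> A" unfolding A_def using path_avoids_y by force
  ultimately show ?thesis unfolding g_def by blast
qed

end

definition cut_point :: "(int \<Rightarrow> int) \<Rightarrow> int \<Rightarrow> int \<Rightarrow> int" where
  "cut_point f z = f \<circ> transpose (inv f z) z"

context
  fixes f :: "int \<Rightarrow> int" and z :: int
  assumes f: "permutation f" and z: "f z \<noteq> z"
begin

lemma apply_inv_self: "f (inv f z) = z"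
  using f by (simp add: permutation_bijective bij_is_surj surj_f_inv_f)

lemma inv_cut_point_ne: "inv f z \<noteq> z"
  using apply_inv_self z by auto

lemma cut_point_self: "cut_point f z z = z"
  by (simp add: cut_point_def apply_inv_self)

lemma cyc_cut_point_self: "cyc (cut_point f z) z = {z}"
  using cyc_fixpoint cut_point_self .

lemma cut_point_eq_comp: "f = cut_point f z \<circ> transpose z (inv f z)"
  by (simp add: cut_point_def comp_assoc transpose_commute)

lemma support_cut_point: "{w. cut_point f z w \<noteq> w} \<subseteq> {w. f w \<noteq> w} - {z}"
proof
  fix w assume w: "w \<in> {w. cut_point f z w \<noteq> w}"
  then have "w \<noteq> z" using cut_point_self by auto
  moreover have "f w \<noteq> w"
  proof (cases "w = inv f z")
    case True
    then show ?thesis using apply_inv_self inv_cut_point_ne by simp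
  next
    case False
    then show ?thesis using w \<open>w \<noteq> z\<close> by (simp add: cut_point_def)
  qed
  ultimately show "w \<in> {w. f w \<noteq> w} - {z}" by simp
qed

text \<open>f is obtained back from cut_point f z by merging the fixed point z into the cycle of inv f z.\<close>
lemma cyc_cut_point:
  assumes "a \<noteq> z"
  shows "cyc (cut_point f z) a = cyc f a - {z}"
proof -
  define u where "u = inv f z"
  have perm': "permutation (cut_point f z)"
    using f by (simp add: cut_point_def permutation_compose permutation_swap_id)
  have u_sep: "u \<notin> cyc (cut_point f z) z" using cyc_cut_point_self inv_cut_point_ne by (simp add: u_def)
  have merge: "cyc f z = {z} \<union> cyc (cut_point f z) u"
    using cyc_comp_transpose_merge[OF perm' u_sep] cyc_cut_point_self cut_point_eq_comp[symmetric]
    by (simp add: u_def)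
  have z_notin: "z \<notin> cyc (cut_point f z) b" if "b \<noteq> z" for b
    using cyc_sym[OF perm'] cyc_cut_point_self that by blast
  show ?thesis
  proof (cases "a \<in> cyc (cut_point f z) u")
    case True
    then have "a \<in> cyc f z" using merge by simp
    then have "cyc f a = cyc f z" by (rule cyc_eq[OF f])
    then show ?thesis
      using merge cyc_eq[OF perm' True] z_notin[of u] inv_cut_point_ne by (auto simp: u_def)
  next
    case False
    then have "cyc f a = cyc (cut_point f z) a"
      using cyc_comp_transpose_other[OF perm', of a z u] cyc_cut_point_self assms
        cut_point_eq_comp[symmetric]
      by (simp add: u_def)
    then show ?thesis using z_notin[OF assms] by simp
  qed
qed

end

definition ncycles :: "int set \<Rightarrow> (int \<Rightarrow> int) \<Rightarrow> nat" where
  "ncycles X f = card (cyc f ` X)"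

lemma ncycles_merge:
  assumes f: "f permutes X" "finite X" and xy: "x \<in> X" "y \<in> X" "y \<notin> cyc f x"
  shows "ncycles X (f \<circ> transpose x y) + 1 = ncycles X f"
proof -
  have perm: "permutation f" using f by (simp add: permutes_imp_permutation)
  define M where "M = cyc f x \<union> cyc f y"
  have not_outside: "C \<notin> cyc f ` (X - M)" if "C \<subseteq> M" for C
    using that self_in_cyc by blast
  have "cyc (f \<circ> transpose x y) ` X = insert M (cyc f ` (X - M))"
  proof -
    have inside: "cyc (f \<circ> transpose x y) w = M" if "w \<in> M" for w
      using cyc_eq[OF permutation_compose[OF perm permutation_swap_id]] that
        cyc_comp_transpose_merge[OF perm xy(3)] unfolding M_def by blast
    have outside: "cyc (f \<circ> transpose x y) w = cyc f w" if "w \<notin> M" for w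
      using cyc_comp_transpose_other[OF perm] that unfolding M_def by blast
    show ?thesis
    proof (intro equalityI subsetI)
      fix C assume "C \<in> cyc (f \<circ> transpose x y) ` X"
      then obtain w where "w \<in> X" "C = cyc (f \<circ> transpose x y) w" by blast
      then show "C \<in> insert M (cyc f ` (X - M))" using inside outside by (cases "w \<in> M") auto
    next
      fix C assume "C \<in> insert M (cyc f ` (X - M))"
      moreover have "M = cyc (f \<circ> transpose x y) x" using inside[of x] by (simp add: M_def)
      ultimately show "C \<in> cyc (f \<circ> transpose x y) ` X"
        using xy(1) outside by (auto intro: image_eqI)
    qed
  qed
  moreover have "cyc f ` X = insert (cyc f x) (insert (cyc f y) (cyc f ` (X - M)))"
    using xy cyc_eq[OF perm] unfolding M_def by (auto simp: image_iff)
  moreover have "cyc f x \<noteq> cyc f y" using xy(3) self_in_cyc by blast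
  ultimately show ?thesis
    using not_outside[of M] not_outside[of "cyc f x"] not_outside[of "cyc f y"] f(2)
    unfolding ncycles_def M_def by simp
qed

lemma ncycles_comp_transpose:
  assumes f: "f permutes X" "finite X" and xy: "x \<in> X" "y \<in> X" "x \<noteq> y"
  shows "int (ncycles X (f \<circ> transpose x y)) = int (ncycles X f) + (if y \<in> cyc f x then 1 else -1)"
proof (cases "y \<in> cyc f x")
  case True
  define g where "g = f \<circ> transpose x y"
  have "g permutes X" using f xy by (simp add: g_def permutes_compose permutes_swap_id)
  moreover have "y \<notin> cyc g x"
    unfolding g_def using cyc_comp_transpose_split f xy True by (simp add: permutes_imp_permutation)
  moreover have "g \<circ> transpose x y = f" by (simp add: g_def comp_assoc)
  ultimately show ?thesis using ncycles_merge[of g X x y] f xy True by (simp add: g_def)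
next
  case False
  then show ?thesis using ncycles_merge[OF f xy(1,2)] by simp
qed

lemma ncycles_transpose_comp:
  assumes h: "h permutes X" "finite X" and xy: "x \<in> X" "y \<in> X" "x \<noteq> y"
  shows "int (ncycles X (transpose x y \<circ> h)) = int (ncycles X h) + (if y \<in> cyc h x then 1 else -1)"
proof -
  have inv_h: "inv h permutes X" using permutes_inv[OF h(1)] .
  have "transpose x y \<circ> h = inv (inv h \<circ> transpose x y)"
    using h by (simp add: o_inv_distrib permutes_bij bij_imp_bij_inv permutes_inv_inv)
  moreover have "permutation (inv h \<circ> transpose x y)" "permutation h"
    using inv_h h xy by (auto simp: permutes_imp_permutation permutes_compose permutes_swap_id)
  ultimately show ?thesis
    using ncycles_comp_transpose[OF inv_h h(2) xy] by (simp add: cyc_inv ncycles_def)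
qed

section \<open>The cycle sum\<close>

definition cycle_sum :: "int set \<Rightarrow> (int \<Rightarrow> int) \<Rightarrow> (int \<Rightarrow> int) \<Rightarrow> nat" where
  "cycle_sum X G f = ncycles X f + ncycles X (inv f \<circ> G)"

context
  fixes X :: "int set" and G :: "int \<Rightarrow> int"
  assumes G: "G permutes X" and X: "finite X"
begin

lemma cycle_sum_comp_transpose:
  assumes f: "f permutes X" and xy: "x \<in> X" "y \<in> X" "x \<noteq> y" "y \<notin> cyc f x"
  shows "int (cycle_sum X G (f \<circ> transpose x y))
    = int (cycle_sum X G f) - 1 + (if y \<in> cyc (inv f \<circ> G) x then 1 else -1)"
proof -
  have "inv (f \<circ> transpose x y) \<circ> G = transpose x y \<circ> (inv f \<circ> G)"
    using f by (simp add: o_inv_distrib permutes_bij comp_assoc)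
  moreover have "inv f \<circ> G permutes X" using f G by (simp add: permutes_compose permutes_inv)
  ultimately show ?thesis
    using ncycles_comp_transpose[OF f X xy(1-3)] ncycles_transpose_comp[of "inv f \<circ> G" X x y] X xy
    unfolding cycle_sum_def by simp
qed

corollary cycle_sum_comp_transpose_le:
  assumes "f permutes X" "x \<in> X" "y \<in> X" "x \<noteq> y" "y \<notin> cyc f x"
  shows "cycle_sum X G (f \<circ> transpose x y) \<le> cycle_sum X G f"
  using cycle_sum_comp_transpose[OF assms] by (simp split: if_splits)

corollary cycle_sum_comp_transpose_drop:
  assumes f: "f permutes X" and xy: "x \<in> X" "y \<in> X" "x \<noteq> y" "f x = x"
    and A: "x \<in> A" "y \<notin> A" "\<And>w. w \<in> A \<Longrightarrow> inv f (G w) \<in> A"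
  shows "cycle_sum X G (f \<circ> transpose x y) + 2 = cycle_sum X G f"
proof -
  have "cyc (inv f \<circ> G) x \<subseteq> A" by (rule cyc_subsetI) (use A in auto)
  then have "y \<notin> cyc (inv f \<circ> G) x" using A(2) by blast
  moreover have "y \<notin> cyc f x" using cyc_fixpoint[of f x] xy(3,4) by simp
  ultimately show ?thesis using cycle_sum_comp_transpose[OF f xy(1-3)] by simp
qed

lemma cycle_sum_cut_point:
  assumes f: "f permutes X" and z: "z \<in> X" "f z \<noteq> z"
  shows "cut_point f z permutes X" "cycle_sum X G f \<le> cycle_sum X G (cut_point f z)"
proof -
  have "inv f z \<in> X" using f z(1) by (simp add: permutes_in_image permutes_inv)
  then show perm: "cut_point f z permutes X"
    using f z by (simp add: cut_point_def permutes_compose permutes_swap_id)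
  have "permutation f" using permutes_imp_permutation[OF X f] .
  note cut = cut_point_eq_comp[OF this z(2), symmetric] cyc_cut_point_self[OF this z(2)]
    inv_cut_point_ne[OF this z(2)]
  show "cycle_sum X G f \<le> cycle_sum X G (cut_point f z)"
    using cycle_sum_comp_transpose_le[OF perm z(1) \<open>inv f z \<in> X\<close>] cut by simp
qed

end

lemma cycle_sum_restrict_support:
  assumes G: "G permutes X" and X: "finite X" and f: "f permutes X"
  obtains g where "g permutes X" "{w. g w \<noteq> w} \<subseteq> S"
    "\<And>a. a \<in> S \<Longrightarrow> cyc g a \<inter> S = cyc f a \<inter> S" "cycle_sum X G f \<le> cycle_sum X G g"
proof -
  have "\<exists>g. g permutes X \<and> {w. g w \<noteq> w} \<subseteq> S
    \<and> (\<forall>a\<in>S. cyc g a \<inter> S = cyc f a \<inter> S) \<and> cycle_sum X G f \<le> cycle_sum X G g"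
    using f
  proof (induction "card ({w. f w \<noteq> w} - S)" arbitrary: f rule: less_induct)
    case less
    show ?case
    proof (cases "{w. f w \<noteq> w} \<subseteq> S")
      case True
      then show ?thesis using less.prems by blast
    next
      case False
      then obtain z where z: "f z \<noteq> z" "z \<notin> S" by auto
      have "z \<in> X" using z(1) less.prems by (meson permutes_not_in)
      have "permutation f" using permutes_imp_permutation[OF X less.prems] .
      note cut = cycle_sum_cut_point[OF G X less.prems \<open>z \<in> X\<close> z(1)]
        support_cut_point[OF \<open>permutation f\<close> z(1)] cyc_cut_point[OF \<open>permutation f\<close> z(1)]
      have "{w. f w \<noteq> w} \<subseteq> X" using less.prems permutes_not_in by fastforce
      then have "finite ({w. f w \<noteq> w} - S)" using X finite_subset by blast
      moreover have "{w. cut_point f z w \<noteq> w} - S \<subset> {w. f w \<noteq> w} - S" using cut(3) z by blast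
      ultimately have "card ({w. cut_point f z w \<noteq> w} - S) < card ({w. f w \<noteq> w} - S)"
        by (rule psubset_card_mono)
      moreover have "\<forall>a\<in>S. cyc (cut_point f z) a \<inter> S = cyc f a \<inter> S"
      proof
        fix a assume "a \<in> S"
        then show "cyc (cut_point f z) a \<inter> S = cyc f a \<inter> S" using cut(4)[of a] z(2) by blast
      qed
      ultimately show ?thesis
        using less.hyps[OF _ cut(1)] cut(2) by (metis le_trans)
    qed
  qed
  then show ?thesis using that by blast
qed

context
  fixes X :: "int set" and G \<sigma> :: "int \<Rightarrow> int"
  assumes G: "G permutes X" and X: "finite X" and \<sigma>: "\<sigma> permutes X"
begin

lemma cycle_sum_le_three_transpositions:
  assumes cycles: "y1 \<in> cyc \<sigma> x1" "y2 \<in> cyc \<sigma> x2" "y3 \<in> cyc \<sigma> x3" "x1 \<noteq> y1" "x2 \<noteq> y2" "x3 \<noteq> y3"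
    and distinct: "x2 \<notin> cyc \<sigma> x1" "x3 \<notin> cyc \<sigma> x1" "x3 \<notin> cyc \<sigma> x2"
  shows "cycle_sum X G \<sigma> \<le> cycle_sum X G (transpose x1 y1 \<circ> transpose x2 y2 \<circ> transpose x3 y3)"
proof -
  have perm: "permutation \<sigma>" using permutes_imp_permutation[OF X \<sigma>] .
  define S where "S = {x1, y1, x2, y2, x3, y3}"
  obtain g where g: "g permutes X" "{w. g w \<noteq> w} \<subseteq> S"
    "\<And>s. s \<in> S \<Longrightarrow> cyc g s \<inter> S = cyc \<sigma> s \<inter> S" "cycle_sum X G \<sigma> \<le> cycle_sum X G g"
    using cycle_sum_restrict_support[OF G X \<sigma>, of S] by blast
  have "permutation g" using permutes_imp_permutation[OF X g(1)] .
  have disj: "cyc \<sigma> x1 \<inter> cyc \<sigma> x2 = {}" "cyc \<sigma> x1 \<inter> cyc \<sigma> x3 = {}" "cyc \<sigma> x2 \<inter> cyc \<sigma> x3 = {}"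
    using cyc_disjoint[OF perm] distinct by auto
  then have C: "cyc \<sigma> x1 \<inter> S = {x1, y1}" "cyc \<sigma> x2 \<inter> S = {x2, y2}" "cyc \<sigma> x3 \<inter> S = {x3, y3}"
    using cycles(1-3) self_in_cyc unfolding S_def by blast+
  moreover have "cyc \<sigma> y1 = cyc \<sigma> x1" "cyc \<sigma> y2 = cyc \<sigma> x2" "cyc \<sigma> y3 = cyc \<sigma> x3"
    using cyc_eq[OF perm] cycles(1-3) by simp_all
  ultimately have C': "cyc \<sigma> y1 \<inter> S = {y1, x1}" "cyc \<sigma> y2 \<inter> S = {y2, x2}" "cyc \<sigma> y3 \<inter> S = {y3, x3}"
    by auto
  have swap: "g s = t" if "s \<in> S" "cyc \<sigma> s \<inter> S = {s, t}" "s \<noteq> t" for s t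
    using support_perm_swap[OF \<open>permutation g\<close> g(2)] g(3)[OF that(1)] that(2,3) by simp
  have S: "x1 \<in> S" "y1 \<in> S" "x2 \<in> S" "y2 \<in> S" "x3 \<in> S" "y3 \<in> S" by (simp_all add: S_def)
  have "distinct [x1, y1, x2, y2, x3, y3]"
    using disj cycles self_in_cyc[of x1 \<sigma>] self_in_cyc[of x2 \<sigma>] self_in_cyc[of x3 \<sigma>] by (simp, blast)
  moreover have "g x1 = y1" "g y1 = x1" "g x2 = y2" "g y2 = x2" "g x3 = y3" "g y3 = x3"
    using swap[OF S(1) C(1)] swap[OF S(2) C'(1)] swap[OF S(3) C(2)] swap[OF S(4) C'(2)]
      swap[OF S(5) C(3)] swap[OF S(6) C'(3)] cycles(4-6) by auto
  ultimately have "g = transpose x1 y1 \<circ> transpose x2 y2 \<circ> transpose x3 y3"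
    by (intro fun_eq_on_support[OF g(2) order_trans[OF support_transpose3]])
      (auto simp: S_def)
  then show ?thesis using g(4) by simp
qed

lemma cycle_sum_le_transposition_3cycle:
  assumes cycles: "y1 \<in> cyc \<sigma> x1" "x1 \<noteq> y1" "y \<in> cyc \<sigma> x" "z \<in> cyc \<sigma> x" "distinct [x, y, z]"
    and distinct: "x \<notin> cyc \<sigma> x1"
  shows "\<exists>e\<in>{x, z}. cycle_sum X G \<sigma> \<le> cycle_sum X G (transpose x1 y1 \<circ> transpose x z \<circ> transpose y e)"
proof -
  have perm: "permutation \<sigma>" using permutes_imp_permutation[OF X \<sigma>] .
  define S where "S = {x1, y1, x, y, z}"
  obtain g where g: "g permutes X" "{w. g w \<noteq> w} \<subseteq> S"
    "\<And>s. s \<in> S \<Longrightarrow> cyc g s \<inter> S = cyc \<sigma> s \<inter> S" "cycle_sum X G \<sigma> \<le> cycle_sum X G g"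
    using cycle_sum_restrict_support[OF G X \<sigma>, of S] by blast
  have "permutation g" using permutes_imp_permutation[OF X g(1)] .
  have disj: "cyc \<sigma> x1 \<inter> cyc \<sigma> x = {}" using cyc_disjoint[OF perm distinct] .
  then have C: "cyc \<sigma> x1 \<inter> S = {x1, y1}" "cyc \<sigma> x \<inter> S = {x, y, z}"
    using cycles(1,3,4) self_in_cyc unfolding S_def by blast+
  moreover have "cyc \<sigma> y1 = cyc \<sigma> x1" using cyc_eq[OF perm] cycles(1) by simp
  ultimately have C': "cyc \<sigma> y1 \<inter> S = {y1, x1}" by auto
  have S: "x1 \<in> S" "y1 \<in> S" "x \<in> S" by (simp_all add: S_def)
  have g1: "g x1 = y1" "g y1 = x1"
    using support_perm_swap[OF \<open>permutation g\<close> g(2)] g(3)[OF S(1)] g(3)[OF S(2)] C(1) C' cycles(2)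
    by auto
  have dist: "distinct [x1, y1, x, y, z]"
    using disj cycles self_in_cyc[of x1 \<sigma>] self_in_cyc[of x \<sigma>] by (simp, blast)
  note g_eqI = fun_eq_on_support[OF g(2) order_trans[OF support_transpose3]]
  consider "g x = y" "g y = z" "g z = x" | "g x = z" "g z = y" "g y = x"
    using support_perm_3cycle[OF \<open>permutation g\<close> g(2)] g(3)[OF S(3)] C(2) cycles(5) by auto
  then have "\<exists>e\<in>{x, z}. g = transpose x1 y1 \<circ> transpose x z \<circ> transpose y e"
  proof cases
    case 1
    have "g = transpose x1 y1 \<circ> transpose x z \<circ> transpose y x"
      by (rule g_eqI) (use 1 g1 dist in \<open>auto simp: S_def\<close>)
    then show ?thesis by blast
  next
    case 2
    have "g = transpose x1 y1 \<circ> transpose x z \<circ> transpose y z"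
      by (rule g_eqI) (use 2 g1 dist in \<open>auto simp: S_def\<close>)
    then show ?thesis by blast
  qed
  then show ?thesis using g(4) by auto
qed

end

section \<open>The two rotations gdg\<close>

lemma PM_eq: "PM n = {- int n..-1} \<union> {1..int n}"
  unfolding PM_def by auto

lemma finite_PM [simp]: "finite (PM n)"
  unfolding PM_eq by simp

lemma card_PM: "card (PM n) = 2 * n"
  unfolding PM_eq by (subst card_Un_disjoint) auto

lemma uminus_in_PM_iff [simp]: "- x \<in> PM n \<longleftrightarrow> x \<in> PM n"
  unfolding PM_def by auto

lemma delta_eq_uminus: "delta = uminus"
  by (simp add: fun_eq_iff delta_def)

context
  fixes n :: nat
  assumes n: "n \<ge> 1"
begin

lemma inv_gamma: "inv (gamma n) = (\<lambda>k. if 2 \<le> k \<and> k \<le> int n then k - 1 else if k = 1 then int n else k)"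
  by (rule inv_equality) (use n in \<open>auto simp: gamma_def\<close>)

lemma gdg_eq:
  "gdg n k = (if 1 \<le> k \<and> k < int n then k + 1 else if k = int n then 1
     else if - int n \<le> k \<and> k < -1 then k + 1 else if k = -1 then - int n else k)"
  using n by (auto simp: gdg_def inv_gamma delta_def gamma_def)

lemma gdg_pos_iff: "0 < gdg n k \<longleftrightarrow> 0 < k"
  using n unfolding gdg_eq by auto

lemma gdg_permutes: "gdg n permutes PM n"
proof (rule bij_imp_permutes)
  have "bij (gamma n)"
    by (rule o_bij[of "inv (gamma n)"]) (use n in \<open>auto simp: fun_eq_iff inv_gamma gamma_def\<close>)
  moreover have "bij delta"
    by (rule o_bij[of delta]) (auto simp: delta_def)
  ultimately have "inj (gdg n)"
    unfolding gdg_def by (intro bij_is_inj bij_comp bij_imp_bij_inv)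
  moreover have "gdg n ` PM n \<subseteq> PM n" unfolding gdg_eq PM_def by auto
  ultimately have "gdg n ` PM n = PM n"
    by (meson endo_inj_surj finite_PM inj_on_subset subset_UNIV)
  then show "bij_betw (gdg n) (PM n) (PM n)"
    unfolding bij_betw_def using \<open>inj (gdg n)\<close> inj_on_subset[of "gdg n" UNIV "PM n"] by simp
qed (use n in \<open>auto simp: gdg_eq PM_def\<close>)

lemma ncycles_gdg_le: "ncycles (PM n) (gdg n) \<le> 2"
proof -
  have perm: "permutation (gdg n)" using permutes_imp_permutation[OF finite_PM gdg_permutes] .
  have pos: "(gdg n ^^ k) 1 = int k + 1" if "k < n" for k
    using that by (induction k) (auto simp: gdg_eq)
  have neg: "(gdg n ^^ k) (- int n) = int k - int n" if "k < n" for k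
    using that by (induction k) (auto simp: gdg_eq)
  have "x \<in> cyc (gdg n) 1 \<or> x \<in> cyc (gdg n) (- int n)" if "x \<in> PM n" for x
  proof (cases "0 < x")
    case True
    then have "x = (gdg n ^^ nat (x - 1)) 1" using that pos[of "nat (x - 1)"] by (auto simp: PM_def)
    then show ?thesis using funpow_in_cyc by metis
  next
    case False
    then have "x = (gdg n ^^ nat (x + int n)) (- int n)"
      using that neg[of "nat (x + int n)"] by (auto simp: PM_def)
    then show ?thesis using funpow_in_cyc by metis
  qed
  then have "cyc (gdg n) ` PM n \<subseteq> {cyc (gdg n) 1, cyc (gdg n) (- int n)}"
    using cyc_eq[OF perm] by blast
  then have "ncycles (PM n) (gdg n) \<le> card {cyc (gdg n) 1, cyc (gdg n) (- int n)}"
    unfolding ncycles_def by (rule card_mono[rotated]) simp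
  also have "\<dots> \<le> 2" by (simp add: card_insert_if)
  finally show ?thesis .
qed

lemma cycle_sum_id_le: "cycle_sum (PM n) (gdg n) id \<le> 2 * n + 2"
proof -
  have "ncycles (PM n) id = 2 * n"
    unfolding ncycles_def using cyc_fixpoint[of id] card_PM
    by (simp add: card_image inj_on_def)
  then show ?thesis using ncycles_gdg_le by (simp add: cycle_sum_def)
qed

end

section \<open>Crossings lower the cycle sum\<close>

context
  fixes n :: nat
  assumes n: "n \<ge> 1"
begin

lemma cycle_sum_transpose_le:
  assumes "x \<in> PM n" "y \<in> PM n" "x \<noteq> y"
  shows "cycle_sum (PM n) (gdg n) (transpose x y) \<le> 2 * n + 2"
  using cycle_sum_comp_transpose_le[OF gdg_permutes[OF n] finite_PM permutes_id assms]
    cycle_sum_id_le[OF n] assms(3)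
  by (simp add: cyc_fixpoint)

lemma cycle_sum_crossing_pair_le:
  assumes ord: "0 < a" "a < b" "b < c" "c \<le> int n" "0 < d" "d \<le> int n" "d < a \<or> c < d"
    and pq: "0 < p" "p \<le> int n" "q < 0" "- int n \<le> q" "p \<notin> {a, b, c, d}"
  shows "cycle_sum (PM n) (gdg n) (transpose a c \<circ> transpose b d \<circ> transpose p q) + 2 \<le> 2 * n"
proof -
  note drop = cycle_sum_comp_transpose_drop[OF gdg_permutes[OF n] finite_PM]
  have PM: "a \<in> PM n" "b \<in> PM n" "c \<in> PM n" "d \<in> PM n" "p \<in> PM n" "q \<in> PM n"
    using ord pq by (auto simp: PM_def)
  define f where "f = transpose a c \<circ> transpose b d"
  have f: "f permutes PM n" using PM by (simp add: f_def permutes_compose permutes_swap_id)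
  (* The arc {a..c-1} is invariant, as the transposition sends its exit point c back to a. *)
  have "cycle_sum (PM n) (gdg n) f + 2 = cycle_sum (PM n) (gdg n) (transpose a c)"
    unfolding f_def
  proof (rule drop[OF permutes_swap_id[OF PM(1,3)] PM(2,4), where A="{a..c-1}"])
    fix w assume "w \<in> {a..c-1}"
    then show "inv (transpose a c) (gdg n w) \<in> {a..c-1}"
      using ord by (auto simp: gdg_eq[OF n] transpose_def)
  qed (use ord in \<open>auto simp: transpose_def\<close>)
  moreover have "cycle_sum (PM n) (gdg n) (f \<circ> transpose p q) + 2 = cycle_sum (PM n) (gdg n) f"
  proof (rule drop[OF f PM(5,6), where A="{w. 0 < w}"])
    fix w :: int assume "w \<in> {w. 0 < w}"
    then show "inv f (gdg n w) \<in> {w. 0 < w}"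
      using ord by (auto simp: f_def o_inv_distrib gdg_pos_iff[OF n] transpose_def)
  qed (use ord pq in \<open>auto simp: f_def transpose_def\<close>)
  ultimately show ?thesis using cycle_sum_transpose_le[OF PM(1,3)] ord by (simp add: f_def)
qed

lemma cycle_sum_crossing_through_le:
  assumes ord: "0 < a" "a < b" "b < c" "c \<le> int n" "0 < d" "d \<le> int n" "d < a \<or> c < d"
    and q: "q < 0" "- int n \<le> q" and e: "e = b \<or> (e < 0 \<and> - int n \<le> e)"
  shows "cycle_sum (PM n) (gdg n) (transpose a c \<circ> transpose b q \<circ> transpose d e) + 2 \<le> 2 * n"
proof -
  note drop = cycle_sum_comp_transpose_drop[OF gdg_permutes[OF n] finite_PM]
  have PM: "a \<in> PM n" "b \<in> PM n" "c \<in> PM n" "d \<in> PM n" "q \<in> PM n" "e \<in> PM n"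
    using ord q e by (auto simp: PM_def)
  define f where "f = transpose a c \<circ> transpose b q"
  define A where "A = {w. 0 < w \<and> w \<le> int n \<and> (c \<le> w \<or> w < a)}"
  have f: "f permutes PM n" using PM by (simp add: f_def permutes_compose permutes_swap_id)
  have "cycle_sum (PM n) (gdg n) f + 2 = cycle_sum (PM n) (gdg n) (transpose a c)"
    unfolding f_def
  proof (rule drop[OF permutes_swap_id[OF PM(1,3)] PM(2,5), where A="{w. 0 < w}"])
    fix w :: int assume "w \<in> {w. 0 < w}"
    then show "inv (transpose a c) (gdg n w) \<in> {w. 0 < w}"
      using ord by (auto simp: gdg_pos_iff[OF n] transpose_def)
  qed (use ord q in \<open>auto simp: transpose_def\<close>)
  (* The positive points outside {a..c-1} are invariant, as the transposition sends their exit
     point a over to c. *)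
  moreover have "cycle_sum (PM n) (gdg n) (f \<circ> transpose d e) + 2 = cycle_sum (PM n) (gdg n) f"
  proof (rule drop[OF f PM(4,6), where A=A])
    fix w :: int assume "w \<in> A"
    then show "inv f (gdg n w) \<in> A"
      using ord q by (auto simp: A_def f_def o_inv_distrib gdg_eq[OF n] transpose_def)
  qed (use ord q e in \<open>auto simp: A_def f_def\<close>)
  ultimately show ?thesis using cycle_sum_transpose_le[OF PM(1,3)] ord by (simp add: f_def)
qed

end

context
  fixes n :: nat and \<sigma> :: "int \<Rightarrow> int"
  assumes n: "n \<ge> 1" and \<sigma>: "\<sigma> permutes PM n"
begin

lemma cycle_sum_lt_of_crossing_pair:
  assumes ord: "0 < a" "a < b" "b < c" "c \<le> int n" "0 < d" "d \<le> int n" "d < a \<or> c < d"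
    and pq: "0 < p" "p \<le> int n" "q < 0" "- int n \<le> q"
    and cycles: "c \<in> cyc \<sigma> a" "d \<in> cyc \<sigma> b" "q \<in> cyc \<sigma> p"
      "b \<notin> cyc \<sigma> a" "p \<notin> cyc \<sigma> a" "p \<notin> cyc \<sigma> b"
  shows "cycle_sum (PM n) (gdg n) \<sigma> < 2 * n"
proof -
  have "cycle_sum (PM n) (gdg n) \<sigma>
      \<le> cycle_sum (PM n) (gdg n) (transpose a c \<circ> transpose b d \<circ> transpose p q)"
    using ord pq
    by (intro cycle_sum_le_three_transpositions[OF gdg_permutes[OF n] finite_PM \<sigma> cycles(1-3) _ _ _
          cycles(4-6)]) auto
  moreover have "p \<notin> {a, b, c, d}" using cycles by auto
  ultimately show ?thesis using cycle_sum_crossing_pair_le[OF n ord pq] by linarith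
qed

lemma cycle_sum_lt_of_crossing_through:
  assumes ord: "0 < a" "a < b" "b < c" "c \<le> int n" "0 < d" "d \<le> int n" "d < a \<or> c < d"
    and q: "q1 < 0" "- int n \<le> q1" "q2 < 0" "- int n \<le> q2"
    and cycles: "c \<in> cyc \<sigma> a" "q1 \<in> cyc \<sigma> b" "q2 \<in> cyc \<sigma> d" "b \<notin> cyc \<sigma> a" "d \<notin> cyc \<sigma> a"
  shows "cycle_sum (PM n) (gdg n) \<sigma> < 2 * n"
proof -
  note reduce = cycle_sum_le_transposition_3cycle[OF gdg_permutes[OF n] finite_PM \<sigma>]
    cycle_sum_le_three_transpositions[OF gdg_permutes[OF n] finite_PM \<sigma>]
  obtain e where "e = b \<or> (e < 0 \<and> - int n \<le> e)" and
    "cycle_sum (PM n) (gdg n) \<sigma>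
      \<le> cycle_sum (PM n) (gdg n) (transpose a c \<circ> transpose b q1 \<circ> transpose d e)"
  proof (cases "d \<in> cyc \<sigma> b")
    case True
    have "\<exists>e\<in>{b, q1}. cycle_sum (PM n) (gdg n) \<sigma>
        \<le> cycle_sum (PM n) (gdg n) (transpose a c \<circ> transpose b q1 \<circ> transpose d e)"
      by (rule reduce(1)[OF cycles(1) _ True cycles(2) _ cycles(4)]) (use ord q in auto)
    then show ?thesis using that q by blast
  next
    case False
    have "cycle_sum (PM n) (gdg n) \<sigma>
        \<le> cycle_sum (PM n) (gdg n) (transpose a c \<circ> transpose b q1 \<circ> transpose d q2)"
      by (rule reduce(2)[OF cycles(1-3) _ _ _ cycles(4,5) False]) (use ord q in auto)
    then show ?thesis using that q by blast
  qed
  then show ?thesis using cycle_sum_crossing_through_le[OF n ord q(1,2)] by fastforce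
qed

end

section \<open>The non-crossing partition of an element of SNC\<close>

lemma through_uminus_image [simp]: "through (uminus ` C) \<longleftrightarrow> through C"
  unfolding through_def by force

lemma nonthrough_cyc_sign:
  assumes "f permutes PM n" "x \<in> PM n" "\<not> through (cyc f x)" "y \<in> cyc f x"
  shows "0 < y \<longleftrightarrow> 0 < x"
proof -
  have "y \<in> PM n" using cyc_subset_permutes[OF assms(1,2)] assms(4) by blast
  then have "x \<noteq> 0" "y \<noteq> 0" using assms(2) by (auto simp: PM_def)
  moreover have "\<not> (0 < x \<and> y < 0)" "\<not> (x < 0 \<and> 0 < y)"
    using assms(3,4) self_in_cyc[of x f] unfolding through_def by blast+
  ultimately show ?thesis by linarith
qed

lemma nonthrough_cyc_subset:
  assumes "f permutes PM n" "x \<in> {1..int n}" "\<not> through (cyc f x)"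
  shows "cyc f x \<subseteq> {1..int n}"
proof
  fix y assume "y \<in> cyc f x"
  moreover have "x \<in> PM n" using assms(2) by (simp add: PM_def)
  ultimately have "y \<in> PM n" "0 < y"
    using cyc_subset_permutes[OF assms(1)] nonthrough_cyc_sign[OF assms(1) _ assms(3)] assms(2) by auto
  then show "y \<in> {1..int n}" by (simp add: PM_def)
qed

lemma through_cyc_elems:
  assumes "f permutes PM n" "x \<in> PM n" "through (cyc f x)"
  shows "\<exists>p\<in>cyc f x. 0 < p \<and> p \<le> int n" "\<exists>q\<in>cyc f x. q < 0 \<and> - int n \<le> q"
  using assms(3) cyc_subset_permutes[OF assms(1,2)] unfolding through_def PM_def by force+

lemma through_notin_nonthrough_cyc:
  assumes "permutation f" "\<not> through (cyc f u)" "through (cyc f v)"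
  shows "v \<notin> cyc f u"
  using assms cyc_eq by metis

context
  fixes n :: nat and \<sigma> :: "int \<Rightarrow> int"
  assumes \<sigma>: "\<sigma> \<in> SNC n"
begin

lemma SNC_permutes: "\<sigma> permutes PM n"
  using \<sigma> unfolding SNC_def by auto

lemma SNC_permutation: "permutation \<sigma>"
  using permutes_imp_permutation[OF finite_PM SNC_permutes] .

lemma SNC_cycle_sum: "cycle_sum (PM n) (gdg n) \<sigma> = 2 * n"
  using \<sigma> unfolding SNC_def cycle_sum_def ncycles_def ncyc_def by auto

lemma SNC_inv_apply:
  assumes "x \<in> PM n"
  shows "inv \<sigma> x = - \<sigma> (- x)"
proof -
  have "\<sigma> (- \<sigma> (- x)) = x"
    using \<sigma> assms unfolding SNC_def is_pairing_def delta_def by auto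
  then show ?thesis using SNC_permutes by (metis permutes_inverses(2))
qed

lemma SNC_cyc_uminus:
  assumes "x \<in> PM n"
  shows "cyc \<sigma> (- x) = uminus ` cyc \<sigma> x"
proof -
  have "(inv \<sigma> ^^ k) (- x) = - (\<sigma> ^^ k) x" for k
  proof (induction k)
    case (Suc k)
    have "(\<sigma> ^^ k) x \<in> PM n"
      using cyc_subset_permutes[OF SNC_permutes assms] funpow_in_cyc by blast
    then show ?case using Suc SNC_inv_apply[of "- (\<sigma> ^^ k) x"] by simp
  qed simp
  then have "cyc (inv \<sigma>) (- x) = uminus ` cyc \<sigma> x" unfolding cyc_def by auto
  then show ?thesis using cyc_inv[OF SNC_permutation] by simp
qed

text \<open>Without a through cycle the positive half would be invariant under sigma and gdg n,
  contradicting transitivity.\<close>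
lemma SNC_through_exists:
  assumes n: "n \<ge> 1"
  shows "\<exists>x\<in>{1..int n}. through (cyc \<sigma> x)"
proof (rule ccontr)
  assume none: "\<not> ?thesis"
  have nonthrough: "\<not> through (cyc \<sigma> x)" if "x \<in> PM n" for x
  proof
    assume "through (cyc \<sigma> x)"
    then have "through (cyc \<sigma> (- x))" using SNC_cyc_uminus that by simp
    moreover have "x \<in> {1..int n} \<or> - x \<in> {1..int n}" using that by (auto simp: PM_def)
    ultimately show False using none \<open>through (cyc \<sigma> x)\<close> by auto
  qed
  have pos_cyc: "0 < w" if "0 < z" "w \<in> cyc \<sigma> z" for z w
  proof (cases "z \<in> PM n")
    case True
    then show ?thesis using nonthrough_cyc_sign[OF SNC_permutes True nonthrough[OF True]] that by simp
  next
    case False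
    then show ?thesis using cyc_fixpoint[of \<sigma> z] SNC_permutes that by (simp add: permutes_not_in)
  qed
  let ?R = "{(z, \<sigma> z) | z. True} \<union> {(z, inv \<sigma> z) | z. True}
    \<union> {(z, gdg n z) | z. True} \<union> {(z, inv (gdg n) z) | z. True}"
  have "1 \<in> PM n" "- 1 \<in> PM n" using n by (auto simp: PM_def)
  then have "(1, - 1) \<in> ?R\<^sup>*" using \<sigma> unfolding SNC_def transitive_on_def by blast
  moreover have "0 < z" if "(1, z) \<in> ?R\<^sup>*" for z :: int
    using that
  proof (induction rule: rtrancl_induct)
    case (step y z)
    have "inv \<sigma> y \<in> cyc \<sigma> y" using apply_in_cyc[of "inv \<sigma>" y] cyc_inv[OF SNC_permutation] by simp
    moreover have "0 < inv (gdg n) y"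
      using step(3) gdg_pos_iff[OF n, of "inv (gdg n) y"] permutes_inverses(1)[OF gdg_permutes[OF n]]
      by simp
    ultimately show ?case using step pos_cyc[of y] gdg_pos_iff[OF n] by auto
  qed simp
  ultimately show False by fastforce
qed

end

definition through_block :: "nat \<Rightarrow> (int \<Rightarrow> int) \<Rightarrow> int set" where
  "through_block n \<sigma> = {x \<in> {1..int n}. through (cyc \<sigma> x)}"

definition cycle_partition :: "nat \<Rightarrow> (int \<Rightarrow> int) \<Rightarrow> int set set" where
  "cycle_partition n \<sigma> = insert (through_block n \<sigma>) (cyc \<sigma> ` {x \<in> {1..int n}. \<not> through (cyc \<sigma> x)})"

context
  fixes n :: nat and \<sigma> :: "int \<Rightarrow> int"
  assumes \<sigma>: "\<sigma> \<in> SNC n" and n: "n \<ge> 1"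
begin

lemma through_block_nonempty: "through_block n \<sigma> \<noteq> {}"
  using SNC_through_exists[OF \<sigma> n] unfolding through_block_def by blast

lemma is_partition_cycle_partition: "is_partition n (cycle_partition n \<sigma>)"
proof -
  note perm = SNC_permutation[OF \<sigma>] and nonthrough = nonthrough_cyc_subset[OF SNC_permutes[OF \<sigma>]]
  have "\<Union>(cycle_partition n \<sigma>) = {1..int n}"
  proof (intro equalityI subsetI)
    fix y assume "y \<in> {1..int n}"
    then show "y \<in> \<Union>(cycle_partition n \<sigma>)"
      unfolding cycle_partition_def through_block_def by (cases "through (cyc \<sigma> y)") auto
  next
    fix y assume "y \<in> \<Union>(cycle_partition n \<sigma>)"
    then show "y \<in> {1..int n}" using nonthrough unfolding cycle_partition_def through_block_def by blast
  qed
  moreover have "{} \<notin> cycle_partition n \<sigma>"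
    using through_block_nonempty self_in_cyc unfolding cycle_partition_def by blast
  moreover have "V \<inter> W = {}" if "V \<in> cycle_partition n \<sigma>" "W \<in> cycle_partition n \<sigma>" "V \<noteq> W" for V W
  proof -
    have "cyc \<sigma> x \<inter> through_block n \<sigma> = {}" if "\<not> through (cyc \<sigma> x)" for x
      using that cyc_eq[OF perm] unfolding through_block_def by auto
    moreover have "cyc \<sigma> x \<inter> cyc \<sigma> y = {}" if "cyc \<sigma> x \<noteq> cyc \<sigma> y" for x y
      using that cyc_disjoint[OF perm] cyc_eq_iff[OF perm] by metis
    ultimately show ?thesis using that unfolding cycle_partition_def by blast
  qed
  ultimately show ?thesis unfolding is_partition_def by blast
qed

lemma cycle_partition_block:
  assumes "U \<in> cycle_partition n \<sigma>" "U \<noteq> through_block n \<sigma>" "u \<in> U"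
  shows "U = cyc \<sigma> u" "\<not> through (cyc \<sigma> u)"
  using assms cyc_eq[OF SNC_permutation[OF \<sigma>]] unfolding cycle_partition_def by auto

lemma nonthrough_cycles_not_crossing:
  assumes ord: "0 < a" "a < b" "b < c" "c < d" "d \<le> int n"
    and cycles: "c \<in> cyc \<sigma> a" "d \<in> cyc \<sigma> b" "b \<notin> cyc \<sigma> a"
    and nonthrough: "\<not> through (cyc \<sigma> a)" "\<not> through (cyc \<sigma> b)"
  shows False
proof -
  note perm = SNC_permutation[OF \<sigma>]
  obtain t where t: "t \<in> {1..int n}" "through (cyc \<sigma> t)" using SNC_through_exists[OF \<sigma> n] by blast
  then have "t \<in> PM n" by (simp add: PM_def)
  then obtain p q where "0 < p" "p \<le> int n" "p \<in> cyc \<sigma> t" "q < 0" "- int n \<le> q" "q \<in> cyc \<sigma> t"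
    using through_cyc_elems[OF SNC_permutes[OF \<sigma>] _ t(2)] by metis
  moreover from this have "q \<in> cyc \<sigma> p" "through (cyc \<sigma> p)" using t(2) cyc_eq[OF perm] by auto
  ultimately have "cycle_sum (PM n) (gdg n) \<sigma> < 2 * n"
    using cycle_sum_lt_of_crossing_pair[OF n SNC_permutes[OF \<sigma>], of a b c d p q] ord cycles
      through_notin_nonthrough_cyc[OF perm] nonthrough
    by auto
  then show False using SNC_cycle_sum[OF \<sigma>] by simp
qed

lemma nonthrough_through_not_crossing:
  assumes ord: "0 < a" "a < b" "b < c" "c \<le> int n" "0 < d" "d \<le> int n" "d < a \<or> c < d"
    and "c \<in> cyc \<sigma> a" "\<not> through (cyc \<sigma> a)" "through (cyc \<sigma> b)" "through (cyc \<sigma> d)"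
  shows False
proof -
  have "b \<in> PM n" "d \<in> PM n" using ord by (auto simp: PM_def)
  then obtain q1 q2 where "q1 < 0" "- int n \<le> q1" "q1 \<in> cyc \<sigma> b" "q2 < 0" "- int n \<le> q2" "q2 \<in> cyc \<sigma> d"
    using through_cyc_elems(2)[OF SNC_permutes[OF \<sigma>]] assms(10,11) by metis
  then have "cycle_sum (PM n) (gdg n) \<sigma> < 2 * n"
    using cycle_sum_lt_of_crossing_through[OF n SNC_permutes[OF \<sigma>], of a b c d q1 q2] assms
      through_notin_nonthrough_cyc[OF SNC_permutation[OF \<sigma>]]
    by auto
  then show False using SNC_cycle_sum[OF \<sigma>] by simp
qed

lemma cycle_partition_noncrossing:
  assumes VW: "V \<in> cycle_partition n \<sigma>" "W \<in> cycle_partition n \<sigma>" "V \<noteq> W"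
    and abcd: "a < b" "b < c" "c < d" "a \<in> V" "c \<in> V" "b \<in> W" "d \<in> W"
  shows False
proof -
  have "a \<in> {1..int n}" "d \<in> {1..int n}"
    using is_partition_cycle_partition VW abcd unfolding is_partition_def by blast+
  then have ord: "0 < a" "d \<le> int n" by auto
  have thr: "through (cyc \<sigma> u)" if "u \<in> through_block n \<sigma>" for u
    using that unfolding through_block_def by blast
  show False
  proof (cases "V = through_block n \<sigma>")
    case True
    then have "W \<noteq> through_block n \<sigma>" using VW by simp
    note W = cycle_partition_block[OF VW(2) this]
    show False
      by (rule nonthrough_through_not_crossing[of b c d a])
        (use ord abcd True W[OF abcd(6)] W[OF abcd(7)] thr in auto)
  next
    case False
    note V = cycle_partition_block[OF VW(1) False]
    show False
    proof (cases "W = through_block n \<sigma>")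
      case True
      show False
        by (rule nonthrough_through_not_crossing[of a b c d])
          (use ord abcd True V[OF abcd(4)] V[OF abcd(5)] thr in auto)
    next
      case False
      note W = cycle_partition_block[OF VW(2) False]
      have "b \<notin> cyc \<sigma> a" using V[OF abcd(4)] W[OF abcd(6)] VW(3) cyc_eq[OF SNC_permutation[OF \<sigma>]] by metis
      then show False
        by (rule nonthrough_cycles_not_crossing[rotated 7])
          (use ord abcd V[OF abcd(4)] V[OF abcd(5)] W[OF abcd(6)] W[OF abcd(7)] in auto)
    qed
  qed
qed

lemma cycle_partition_in_NC: "cycle_partition n \<sigma> \<in> NC n"
  unfolding NC_def using is_partition_cycle_partition cycle_partition_noncrossing by blast

end

section \<open>The permutation of a partition\<close>

locale interval_partition =
  fixes n :: nat and P :: "int set set"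
  assumes partition: "is_partition n P"
begin

abbreviation \<pi> :: "int \<Rightarrow> int" where
  "\<pi> \<equiv> perm_of_partition P"

lemma Union_blocks: "\<Union>P = {1..int n}"
  using partition unfolding is_partition_def by blast

lemma block_nonempty: "W \<in> P \<Longrightarrow> W \<noteq> {}"
  using partition unfolding is_partition_def by blast

lemma block_subset: "W \<in> P \<Longrightarrow> W \<subseteq> {1..int n}"
  using Union_blocks by blast

lemma finite_block: "W \<in> P \<Longrightarrow> finite W"
  using block_subset finite_subset by blast

lemma block_unique: "V \<in> P \<Longrightarrow> W \<in> P \<Longrightarrow> w \<in> V \<Longrightarrow> w \<in> W \<Longrightarrow> V = W"
  using partition unfolding is_partition_def by blast

lemma pi_block:
  assumes "W \<in> P" "w \<in> W"
  shows "\<pi> w = (if \<exists>y\<in>W. w < y then Min {y\<in>W. w < y} else Min W)"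
proof -
  have "(THE V. V \<in> P \<and> w \<in> V) = W"
    by (rule the_equality) (use assms block_unique in auto)
  then show ?thesis using assms unfolding perm_of_partition_def by (auto simp: Let_def)
qed

lemma pi_outside: "w \<notin> {1..int n} \<Longrightarrow> \<pi> w = w"
  unfolding perm_of_partition_def using Union_blocks by auto

lemma pi_in_block:
  assumes "W \<in> P" "w \<in> W"
  shows "\<pi> w \<in> W"
proof (cases "\<exists>y\<in>W. w < y")
  case True
  then have "Min {y\<in>W. w < y} \<in> {y\<in>W. w < y}" using finite_block[OF assms(1)] by (intro Min_in) auto
  then show ?thesis using pi_block[OF assms] True by auto
next
  case False
  then show ?thesis using pi_block[OF assms] Min_in[OF finite_block block_nonempty] assms(1) by auto
qed

lemma pi_Max:
  assumes "W \<in> P"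
  shows "\<pi> (Max W) = Min W"
proof -
  have "\<not> (\<exists>y\<in>W. Max W < y)" using Max_ge[OF finite_block[OF assms]] by (auto simp: not_less)
  then show ?thesis using pi_block[OF assms Max_in[OF finite_block block_nonempty]] assms by simp
qed

lemma pi_pred:
  assumes W: "W \<in> P" "y \<in> W" "y \<noteq> Min W"
  shows "Max {z\<in>W. z < y} \<in> W" "Max {z\<in>W. z < y} < y" "\<pi> (Max {z\<in>W. z < y}) = y"
proof -
  define z where "z = Max {z\<in>W. z < y}"
  have fin: "finite {z\<in>W. z < y}" using finite_block[OF W(1)] by simp
  have "Min W < y" using W Min_le[OF finite_block] by (metis order_le_imp_less_or_eq)
  then have "{z\<in>W. z < y} \<noteq> {}" using Min_in[OF finite_block block_nonempty] W(1) by auto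
  then show z: "z \<in> W" "z < y" using Max_in[OF fin] unfolding z_def by auto
  have "Min {y'\<in>W. z < y'} = y"
  proof (rule Min_eqI)
    fix y' assume "y' \<in> {y'\<in>W. z < y'}"
    then show "y \<le> y'" using Max_ge[OF fin, of y'] unfolding z_def[symmetric] by force
  qed (use finite_block[OF W(1)] W z in auto)
  then show "\<pi> z = y" using pi_block[OF W(1) z(1)] W(2) z(2) by auto
qed

lemma pi_image_block:
  assumes "W \<in> P"
  shows "\<pi> ` W = W"
proof
  show "W \<subseteq> \<pi> ` W"
  proof
    fix y assume "y \<in> W"
    show "y \<in> \<pi> ` W"
    proof (cases "y = Min W")
      case True
      then show ?thesis using pi_Max[OF assms] Max_in[OF finite_block block_nonempty] assms by force
    next
      case False
      then show ?thesis using pi_pred[OF assms \<open>y \<in> W\<close>] by force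
    qed
  qed
qed (use pi_in_block assms in blast)

lemma pi_permutes: "\<pi> permutes {1..int n}"
proof (rule inj_imp_permutes)
  have "\<pi> ` {1..int n} = {1..int n}"
    unfolding Union_blocks[symmetric] image_Union using pi_image_block by simp
  then show "inj_on \<pi> {1..int n}" by (intro finite_surj_inj) auto
  show "\<pi> x \<in> {1..int n}" if "x \<in> {1..int n}" for x using \<open>\<pi> ` {1..int n} = {1..int n}\<close> that by blast
qed (auto simp: pi_outside)

lemma cyc_pi:
  assumes "W \<in> P" "w \<in> W"
  shows "cyc \<pi> w = W"
proof -
  have "y \<in> cyc \<pi> (Min W)" if "y \<in> W" for y
    using that
  proof (induction "nat (y - Min W)" arbitrary: y rule: less_induct)
    case less
    show ?case
    proof (cases "y = Min W")
      case False
      note pred = pi_pred[OF assms(1) less.prems False]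
      have "Min W \<le> Max {z\<in>W. z < y}" using Min_le[OF finite_block[OF assms(1)] pred(1)] .
      then have "Max {z\<in>W. z < y} \<in> cyc \<pi> (Min W)" using less.hyps pred(1,2) by simp
      then show ?thesis using cyc_closed pred(3) by metis
    qed simp
  qed
  moreover have "cyc \<pi> (Min W) \<subseteq> W"
    by (rule cyc_subsetI) (use Min_in[OF finite_block block_nonempty] pi_in_block assms(1) in auto)
  ultimately have "cyc \<pi> (Min W) = W" by blast
  moreover have "permutation \<pi>" using permutes_imp_permutation[OF _ pi_permutes] by simp
  ultimately show ?thesis using cyc_eq[of \<pi> w "Min W"] assms(2) by simp
qed

abbreviation \<rho> :: "int \<Rightarrow> int" where
  "\<rho> \<equiv> \<pi> \<circ> delta \<circ> inv \<pi> \<circ> delta"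

lemma inv_pi_pos_iff: "0 < inv \<pi> v \<longleftrightarrow> 0 < v"
proof (cases "v \<in> {1..int n}")
  case True
  then show ?thesis using permutes_in_image[OF permutes_inv[OF pi_permutes], of v] by auto
next
  case False
  then show ?thesis by (simp add: permutes_not_in[OF permutes_inv[OF pi_permutes]])
qed

lemma rho_pos: "0 < w \<Longrightarrow> \<rho> w = \<pi> w"
  using permutes_not_in[OF permutes_inv[OF pi_permutes], of "- w"] by (simp add: delta_eq_uminus)

lemma rho_neg:
  assumes "w < 0"
  shows "\<rho> w = - inv \<pi> (- w)"
proof -
  have "0 < inv \<pi> (- w)" using assms inv_pi_pos_iff by simp
  then show ?thesis using pi_outside[of "- inv \<pi> (- w)"] by (simp add: delta_eq_uminus)
qed

lemma rho_zero: "\<rho> 0 = 0"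
  using permutes_not_in[OF permutes_inv[OF pi_permutes], of 0] pi_outside[of 0]
  by (simp add: delta_eq_uminus)

lemma rho_in_PM_iff: "\<rho> w \<in> PM n \<longleftrightarrow> w \<in> PM n"
proof -
  consider "0 < w" | "w = 0" | "w < 0" by linarith
  then show ?thesis
  proof cases
    case 1
    then show ?thesis using rho_pos permutes_in_image[OF pi_permutes, of w] pi_outside[of w]
      by (auto simp: PM_def)
  next
    case 2
    then show ?thesis using rho_zero by simp
  next
    case 3
    then show ?thesis using rho_neg permutes_in_image[OF permutes_inv[OF pi_permutes], of "- w"]
      permutes_not_in[OF permutes_inv[OF pi_permutes], of "- w"] by (auto simp: PM_def)
  qed
qed

lemma rho_pos_iff: "0 < \<rho> w \<longleftrightarrow> 0 < w"
proof -
  consider "0 < w" | "w = 0" | "w < 0" by linarith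
  then show ?thesis
  proof cases
    case 1
    then show ?thesis
      using rho_pos permutes_in_image[OF pi_permutes, of w] pi_outside[of w] by fastforce
  next
    case 2
    then show ?thesis using rho_zero by simp
  next
    case 3
    then show ?thesis using rho_neg[of w] inv_pi_pos_iff[of "- w"] by simp
  qed
qed

lemma rho_permutes: "\<rho> permutes PM n"
proof (rule inj_imp_permutes)
  have "bij delta" by (rule o_bij[of delta]) (auto simp: delta_def)
  then have "bij \<rho>" using permutes_bij[OF pi_permutes] permutes_bij[OF permutes_inv[OF pi_permutes]]
    by (intro bij_comp)
  then show "inj_on \<rho> (PM n)" using bij_is_inj inj_on_subset by blast
  show "\<rho> w = w" if "w \<notin> PM n" for w
  proof -
    consider "0 < w" | "w = 0" | "w < 0" by linarith
    then show ?thesis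
    proof cases
      case 1
      then show ?thesis using that rho_pos pi_outside by (simp add: PM_def)
    next
      case 2
      then show ?thesis using rho_zero by simp
    next
      case 3
      then show ?thesis
        using that rho_neg[of w] permutes_not_in[OF permutes_inv[OF pi_permutes], of "- w"]
        by (simp add: PM_def)
    qed
  qed
qed (use rho_in_PM_iff in auto)

lemma cyc_rho_block:
  assumes "W \<in> P" "w \<in> W"
  shows "cyc \<rho> w = W"
proof -
  have "cyc \<rho> w = cyc \<pi> w"
  proof (rule cyc_cong)
    fix v assume "v \<in> cyc \<pi> w"
    then have "0 < v" using cyc_pi[OF assms] block_subset[OF assms(1)] by auto
    then show "\<rho> v = \<pi> v" by (rule rho_pos)
  qed
  then show ?thesis using cyc_pi[OF assms] by simp
qed

lemma cyc_rho_uminus_block: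
  assumes "W \<in> P" "w \<in> W"
  shows "cyc \<rho> (- w) = uminus ` W"
proof -
  have "((\<lambda>v. - inv \<pi> (- v)) ^^ k) (- w) = - (inv \<pi> ^^ k) w" for k
    by (induction k) auto
  then have conj: "cyc (\<lambda>v. - inv \<pi> (- v)) (- w) = uminus ` cyc (inv \<pi>) w"
    unfolding cyc_def by auto
  have inv_cyc: "cyc (inv \<pi>) w = W"
    using cyc_inv[OF permutes_imp_permutation[OF _ pi_permutes]] cyc_pi[OF assms] by simp
  have "cyc \<rho> (- w) = cyc (\<lambda>v. - inv \<pi> (- v)) (- w)"
  proof (rule cyc_cong)
    fix v assume "v \<in> cyc (\<lambda>v. - inv \<pi> (- v)) (- w)"
    then have "v < 0" using conj inv_cyc block_subset[OF assms(1)] by auto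
    then show "\<rho> v = - inv \<pi> (- v)" by (rule rho_neg)
  qed
  then show ?thesis using conj inv_cyc by simp
qed

lemma cyc_rho_not_through: "\<not> through (cyc \<rho> y)"
proof -
  have "cyc \<rho> y \<subseteq> {v. 0 < v \<longleftrightarrow> 0 < y}"
    by (rule cyc_subsetI) (use rho_pos_iff in auto)
  then have sign: "0 < v \<longleftrightarrow> 0 < y" if "v \<in> cyc \<rho> y" for v using that by blast
  show ?thesis
  proof
    assume "through (cyc \<rho> y)"
    then obtain u v where "u \<in> cyc \<rho> y" "0 < u" "v \<in> cyc \<rho> y" "v < 0"
      unfolding through_def by blast
    then show False using sign[of u] sign[of v] by simp
  qed
qed

end

section \<open>Decomposition of SNC\<close>

lemma SNC_piV_iff:
  "\<sigma> \<in> SNC_piV n P V \<longleftrightarrow> \<sigma> \<in> SNC n \<and> (\<forall>x\<in>PM n.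
     (cyc \<sigma> x \<in> cyc (perm_of_partition P \<circ> delta \<circ> inv (perm_of_partition P) \<circ> delta) ` PM n
        \<or> cyc \<sigma> x \<subseteq> V \<union> uminus ` V)
     \<and> (cyc \<sigma> x \<subseteq> V \<union> uminus ` V \<longrightarrow> through (cyc \<sigma> x)))"
  unfolding SNC_piV_def Let_def by (simp add: delta_eq_uminus)

context
  fixes n :: nat and \<sigma> :: "int \<Rightarrow> int"
  assumes \<sigma>: "\<sigma> \<in> SNC n" and n: "n \<ge> 1"
begin

lemma through_block_sym_iff:
  assumes "x \<in> PM n"
  shows "x \<in> through_block n \<sigma> \<union> uminus ` through_block n \<sigma> \<longleftrightarrow> through (cyc \<sigma> x)"
proof -
  have "- x \<in> through_block n \<sigma> \<longleftrightarrow> x < 0 \<and> through (cyc \<sigma> x)"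
    using assms SNC_cyc_uminus[OF \<sigma> assms] by (auto simp: through_block_def PM_def)
  moreover have "x \<in> through_block n \<sigma> \<longleftrightarrow> 0 < x \<and> through (cyc \<sigma> x)"
    using assms by (auto simp: through_block_def PM_def)
  moreover have "x \<noteq> 0" using assms by (auto simp: PM_def)
  ultimately show ?thesis by (auto simp: image_iff) (metis minus_minus)
qed

lemma through_cyc_subset_through_block:
  assumes x: "x \<in> PM n" and "through (cyc \<sigma> x)"
  shows "cyc \<sigma> x \<subseteq> through_block n \<sigma> \<union> uminus ` through_block n \<sigma>"
proof
  fix y assume "y \<in> cyc \<sigma> x"
  moreover from this have "y \<in> PM n" using cyc_subset_permutes[OF SNC_permutes[OF \<sigma>] x] by blast
  ultimately show "y \<in> through_block n \<sigma> \<union> uminus ` through_block n \<sigma>"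
    using through_block_sym_iff assms(2) cyc_eq[OF SNC_permutation[OF \<sigma>]] by metis
qed

lemma nonthrough_cyc_eq_cyc_rho:
  assumes x: "x \<in> PM n" and "\<not> through (cyc \<sigma> x)"
  shows "cyc \<sigma> x = cyc (perm_of_partition (cycle_partition n \<sigma>) \<circ> delta
    \<circ> inv (perm_of_partition (cycle_partition n \<sigma>)) \<circ> delta) x"
proof -
  interpret interval_partition n "cycle_partition n \<sigma>"
    using is_partition_cycle_partition[OF \<sigma> n] by unfold_locales
  show ?thesis
  proof (cases "0 < x")
    case True
    then have "cyc \<sigma> x \<in> cycle_partition n \<sigma>"
      using x assms(2) unfolding cycle_partition_def by (auto simp: PM_def)
    then show ?thesis using cyc_rho_block by simp
  next
    case False
    have "- x \<in> PM n" "\<not> through (cyc \<sigma> (- x))"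
      using x assms(2) SNC_cyc_uminus[OF \<sigma> x] by auto
    moreover have "0 < - x" using x False by (auto simp: PM_def)
    ultimately have "cyc \<sigma> (- x) \<in> cycle_partition n \<sigma>"
      unfolding cycle_partition_def by (auto simp: PM_def)
    then have "cyc \<rho> x = uminus ` cyc \<sigma> (- x)"
      using cyc_rho_uminus_block[of "cyc \<sigma> (- x)" "- x"] by simp
    also have "\<dots> = cyc \<sigma> x" using SNC_cyc_uminus[OF \<sigma> \<open>- x \<in> PM n\<close>] by (simp add: image_image)
    finally show ?thesis by simp
  qed
qed

lemma SNC_in_SNC_piV: "\<sigma> \<in> SNC_piV n (cycle_partition n \<sigma>) (through_block n \<sigma>)"
  unfolding SNC_piV_iff
proof (rule conjI[OF \<sigma>], intro ballI)
  fix x assume x: "x \<in> PM n"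
  show "(cyc \<sigma> x \<in> cyc (perm_of_partition (cycle_partition n \<sigma>) \<circ> delta
      \<circ> inv (perm_of_partition (cycle_partition n \<sigma>)) \<circ> delta) ` PM n
    \<or> cyc \<sigma> x \<subseteq> through_block n \<sigma> \<union> uminus ` through_block n \<sigma>)
    \<and> (cyc \<sigma> x \<subseteq> through_block n \<sigma> \<union> uminus ` through_block n \<sigma> \<longrightarrow> through (cyc \<sigma> x))"
  proof (cases "through (cyc \<sigma> x)")
    case True
    then show ?thesis using through_cyc_subset_through_block[OF x] by simp
  next
    case False
    then have "x \<notin> through_block n \<sigma> \<union> uminus ` through_block n \<sigma>"
      using through_block_sym_iff[OF x] by blast
    then show ?thesis using nonthrough_cyc_eq_cyc_rho[OF x False] x self_in_cyc[of x \<sigma>] by blast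
  qed
qed

end

context interval_partition
begin

context
  fixes \<sigma> :: "int \<Rightarrow> int" and V :: "int set"
  assumes piV: "\<sigma> \<in> SNC_piV n P V" and V: "V \<in> P"
begin

lemma SNC_piV_cyc_rho:
  assumes "x \<in> PM n" "\<not> cyc \<sigma> x \<subseteq> V \<union> uminus ` V"
  shows "cyc \<sigma> x = cyc \<rho> x"
proof -
  obtain y where "cyc \<sigma> x = cyc \<rho> y" using piV assms unfolding SNC_piV_iff by blast
  then show ?thesis
    using cyc_eq[OF permutes_imp_permutation[OF finite_PM rho_permutes]] self_in_cyc[of x \<sigma>] by metis
qed

lemma SNC_piV_through_iff:
  assumes "x \<in> PM n"
  shows "through (cyc \<sigma> x) \<longleftrightarrow> cyc \<sigma> x \<subseteq> V \<union> uminus ` V"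
  using piV assms SNC_piV_cyc_rho[OF assms] cyc_rho_not_through unfolding SNC_piV_iff by metis

lemma SNC_piV_block_eq: "V = through_block n \<sigma>"
proof (intro equalityI subsetI)
  fix x assume "x \<in> V"
  then have x: "x \<in> PM n" "x \<in> {1..int n}" using block_subset[OF V] by (auto simp: PM_def)
  have "cyc \<sigma> x \<subseteq> V \<union> uminus ` V"
  proof (rule ccontr)
    assume not_sub: "\<not> cyc \<sigma> x \<subseteq> V \<union> uminus ` V"
    then have "cyc \<sigma> x = V" using SNC_piV_cyc_rho[OF x(1)] cyc_rho_block[OF V \<open>x \<in> V\<close>] by simp
    then show False using not_sub by auto
  qed
  then show "x \<in> through_block n \<sigma>"
    using SNC_piV_through_iff[OF x(1)] x(2) unfolding through_block_def by simp
next
  fix x assume "x \<in> through_block n \<sigma>"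
  then have x: "x \<in> {1..int n}" "through (cyc \<sigma> x)" unfolding through_block_def by auto
  then have "cyc \<sigma> x \<subseteq> V \<union> uminus ` V" using SNC_piV_through_iff[of x] by (simp add: PM_def)
  then have "x \<in> V \<union> uminus ` V" using self_in_cyc[of x \<sigma>] by blast
  then show "x \<in> V" using x(1) block_subset[OF V] by auto
qed

lemma SNC_piV_other_block:
  assumes W: "W \<in> P" "W \<noteq> V" "w \<in> W"
  shows "cyc \<sigma> w = W" "\<not> through (cyc \<sigma> w)"
proof -
  have w: "w \<in> PM n" "0 < w" "w \<notin> V"
    using block_subset[OF W(1)] W block_unique[OF V W(1)] by (auto simp: PM_def)
  then have "w \<notin> V \<union> uminus ` V" using block_subset[OF V] by auto
  then have "\<not> cyc \<sigma> w \<subseteq> V \<union> uminus ` V" using self_in_cyc[of w \<sigma>] by blast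
  then show "cyc \<sigma> w = W" "\<not> through (cyc \<sigma> w)"
    using SNC_piV_cyc_rho[OF w(1)] cyc_rho_block[OF W(1,3)] SNC_piV_through_iff[OF w(1)] by simp_all
qed

lemma SNC_piV_partition_eq: "P = cycle_partition n \<sigma>"
proof (intro equalityI subsetI)
  fix W assume W: "W \<in> P"
  show "W \<in> cycle_partition n \<sigma>"
  proof (cases "W = V")
    case True
    then show ?thesis using SNC_piV_block_eq by (simp add: cycle_partition_def)
  next
    case False
    obtain w where "w \<in> W" using block_nonempty[OF W] by blast
    then have "w \<in> {x \<in> {1..int n}. \<not> through (cyc \<sigma> x)}" "W = cyc \<sigma> w"
      using SNC_piV_other_block[OF W False] block_subset[OF W] by auto
    then show ?thesis unfolding cycle_partition_def by blast
  qed
next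
  fix W assume "W \<in> cycle_partition n \<sigma>"
  then consider "W = through_block n \<sigma>"
    | x where "x \<in> {1..int n}" "\<not> through (cyc \<sigma> x)" "W = cyc \<sigma> x"
    unfolding cycle_partition_def by auto
  then show "W \<in> P"
  proof cases
    case 1
    then show ?thesis using V SNC_piV_block_eq by simp
  next
    case 2
    obtain W' where W': "W' \<in> P" "x \<in> W'" using Union_blocks 2(1) by blast
    have "W' \<noteq> V" using W' 2 SNC_piV_block_eq unfolding through_block_def by auto
    then show ?thesis using SNC_piV_other_block(1)[OF W'(1) _ W'(2)] 2(3) W'(1) by simp
  qed
qed

end

end

lemma SNC_piV_unique:
  assumes "is_partition n P" "\<sigma> \<in> SNC_piV n P V" "V \<in> P"
  shows "V = through_block n \<sigma>" "P = cycle_partition n \<sigma>"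
  using interval_partition.SNC_piV_block_eq[OF _ assms(2,3)]
    interval_partition.SNC_piV_partition_eq[OF _ assms(2,3)] assms(1)
  by (simp_all add: interval_partition_def)

lemma SNC_eq_Union_SNC_piV:
  assumes "n \<ge> 1"
  shows "SNC n = (\<Union>P\<in>NC n. \<Union>V\<in>P. SNC_piV n P V)"
proof -
  have "\<sigma> \<in> (\<Union>P\<in>NC n. \<Union>V\<in>P. SNC_piV n P V)" if \<sigma>: "\<sigma> \<in> SNC n" for \<sigma>
  proof -
    have "through_block n \<sigma> \<in> cycle_partition n \<sigma>" by (simp add: cycle_partition_def)
    then show ?thesis using SNC_in_SNC_piV[OF \<sigma> assms] cycle_partition_in_NC[OF \<sigma> assms] by blast
  qed
  moreover have "SNC_piV n P V \<subseteq> SNC n" for P V unfolding SNC_piV_def by auto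
  ultimately show ?thesis by blast
qed

lemma SNC_piV_disjoint:
  assumes "P \<in> NC n" "V \<in> P" "P' \<in> NC n" "V' \<in> P'" "(P, V) \<noteq> (P', V')"
  shows "SNC_piV n P V \<inter> SNC_piV n P' V' = {}"
proof (rule equals0I)
  fix \<sigma> assume \<sigma>: "\<sigma> \<in> SNC_piV n P V \<inter> SNC_piV n P' V'"
  have "is_partition n P" "is_partition n P'" using assms unfolding NC_def by auto
  then show False using SNC_piV_unique assms \<sigma> by (metis IntD1 IntD2)
qed

theorem lemma6p8:
  fixes n :: nat
  assumes "n \<ge> 2"
  shows "SNC n = (\<Union>P\<in>NC n. \<Union>V\<in>P. SNC_piV n P V)
     \<and> (\<forall>P\<in>NC n. \<forall>V\<in>P. \<forall>P'\<in>NC n. \<forall>V'\<in>P'.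
           (P, V) \<noteq> (P', V') \<longrightarrow> SNC_piV n P V \<inter> SNC_piV n P' V' = {})"
  using SNC_eq_Union_SNC_piV[of n] SNC_piV_disjoint[of _ n] assms by simp

end
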